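(* Let $f,g\in\mathcal{S}(\Omega)$ be tame. Then \[V(f\cdot g)\subseteq V(N(f))\cup V(N(g)).\] If $A$ is nonsingular and, for each $x\in\Omega\setminus\mathbb{R}$, $f'_s(x)$ and $g'_s(x)$ belong to $C_A$, then \[V(f\cdot g)\subseteq\bigcup_{x\in V(f)\cup V(g)}\mathbb{S}_x.\]
   Context: Let $A$ be a finite-dimensional real algebra with unit $1$ ($\mathbb{R}$ identified with $\mathbb{R}1$) which is alternative (the associator $(x,y,z)=(xy)z-x(yz)$ is alternating), with a $^*$-involution $x\mapsto x^c$ (real linear, $(x^c)^c=x$, $(xy)^c=y^cx^c$, $r^c=r$ for $r\in\mathbb{R}$). Let $t(x)=x+x^c$, $n(x)=xx^c$; $A$ is nonsingular if $n(x)=0$ implies $x=0$. Center of $A$: $\{r:(r,a,b)=0,\ ra=ar\ \forall a,b\}$; $C_A=\{0\}\cup\{a:n(a),n(a^c)$ invertible elements of the center$\}$. $\mathbb{S}_A=\{J\in A:t(J)=0,n(J)=1\}$ (assumed non-empty), $Q_A=\mathbb{R}\cup\{x:t(x),n(x)\in\mathbb{R},4n(x)>t(x)^2\}$; every $x\in Q_A$ is $\alpha+\beta J$ with $\alpha,\beta\in\mathbb{R}$, $J\in\mathbb{S}_A$; $x^c=\alpha-\beta J$, $\mathrm{im}(x)=x-t(x)/2$, $\mathbb{S}_x=\{\alpha+\beta I:I\in\mathbb{S}_A\}$. Let $D\subseteq\mathbb{C}$ be non-empty, invariant under conjugation, $\Omega=\{\alpha+\beta J:\alpha+i\beta\in D,J\in\mathbb{S}_A\}$.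 $A_{\mathbb{C}}=\{a+\imath b\}$ with $(a+\imath b)(a'+\imath b')=aa'-bb'+\imath(ab'+ba')$, $\overline{a+\imath b}=a-\imath b$, $(a+\imath b)^c=a^c+\imath b^c$. A stem function $F=F_1+\imath F_2:D\to A_{\mathbb{C}}$ satisfies $F(\bar z)=\overline{F(z)}$ and induces $f=\mathcal{I}(F)$, $f(\alpha+\beta J)=F_1(\alpha+i\beta)+JF_2(\alpha+i\beta)$; $\mathcal{S}(\Omega)$ is the set of these. $f\cdot g=\mathcal{I}(FG)$, $f^c=\mathcal{I}(F^c)$ ($F^c(z)=F(z)^c$), $N(f)=f\cdot f^c$. $f$ is slice preserving if $F_1,F_2$ are real valued; tame if $N(f)$ is slice preserving and $N(f)=N(f^c)$. $V(h)=\{x:h(x)=0\}$. $f'_s(x)=\frac12\mathrm{im}(x)^{-1}(f(x)-f(x^c))$ for $x\in\Omega\setminus\mathbb{R}$. *)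

theory Defs
  imports "HOL-Analysis.Analysis"
begin

text \<open>The real line R is identified with {r *R e}.\<close>

definition assoc :: "('a::real_vector \<Rightarrow> 'a \<Rightarrow> 'a) \<Rightarrow> 'a \<Rightarrow> 'a \<Rightarrow> 'a \<Rightarrow> 'a" where
  "assoc mul x y z = mul (mul x y) z - mul x (mul y z)"

definition alt_star_alg :: "('a::real_vector \<Rightarrow> 'a \<Rightarrow> 'a) \<Rightarrow> 'a \<Rightarrow> ('a \<Rightarrow> 'a) \<Rightarrow> bool" where
  "alt_star_alg mul e cj \<longleftrightarrow>
     (\<exists>B. finite B \<and> span B = (UNIV :: 'a set)) \<and>
     bilinear mul \<and> e \<noteq> 0 \<and>
     (\<forall>x. mul e x = x \<and> mul x e = x) \<and>
     (\<forall>x y z. assoc mul x y z = - assoc mul y x z \<and> assoc mul x y z = - assoc mul x z y) \<and>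
     linear cj \<and> (\<forall>x. cj (cj x) = x) \<and> (\<forall>x y. cj (mul x y) = mul (cj y) (cj x)) \<and>
     (\<forall>r. cj (r *\<^sub>R e) = r *\<^sub>R e)"

definition isR :: "'a::real_vector \<Rightarrow> 'a \<Rightarrow> bool" where
  "isR e x \<longleftrightarrow> (\<exists>r::real. x = r *\<^sub>R e)"

definition tr :: "('a::real_vector \<Rightarrow> 'a) \<Rightarrow> 'a \<Rightarrow> 'a" where
  "tr cj x = x + cj x"

definition nrm :: "('a::real_vector \<Rightarrow> 'a \<Rightarrow> 'a) \<Rightarrow> ('a \<Rightarrow> 'a) \<Rightarrow> 'a \<Rightarrow> 'a" where
  "nrm mul cj x = mul x (cj x)"

definition nonsingular :: "('a::real_vector \<Rightarrow> 'a \<Rightarrow> 'a) \<Rightarrow> ('a \<Rightarrow> 'a) \<Rightarrow> bool" where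
  "nonsingular mul cj \<longleftrightarrow> (\<forall>x. nrm mul cj x = 0 \<longrightarrow> x = 0)"

definition center :: "('a::real_vector \<Rightarrow> 'a \<Rightarrow> 'a) \<Rightarrow> 'a set" where
  "center mul = {r. \<forall>a b. assoc mul r a b = 0 \<and> mul r a = mul a r}"

definition invertible_el :: "('a::real_vector \<Rightarrow> 'a \<Rightarrow> 'a) \<Rightarrow> 'a \<Rightarrow> 'a \<Rightarrow> bool" where
  "invertible_el mul e x \<longleftrightarrow> (\<exists>y. mul x y = e \<and> mul y x = e)"

definition ainv :: "('a::real_vector \<Rightarrow> 'a \<Rightarrow> 'a) \<Rightarrow> 'a \<Rightarrow> 'a \<Rightarrow> 'a" where
  "ainv mul e x = (SOME y. mul x y = e \<and> mul y x = e)"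

definition CA :: "('a::real_vector \<Rightarrow> 'a \<Rightarrow> 'a) \<Rightarrow> 'a \<Rightarrow> ('a \<Rightarrow> 'a) \<Rightarrow> 'a set" where
  "CA mul e cj = {0} \<union> {a. nrm mul cj a \<in> center mul \<and> invertible_el mul e (nrm mul cj a) \<and>
                          nrm mul cj (cj a) \<in> center mul \<and> invertible_el mul e (nrm mul cj (cj a))}"

definition SA :: "('a::real_vector \<Rightarrow> 'a \<Rightarrow> 'a) \<Rightarrow> 'a \<Rightarrow> ('a \<Rightarrow> 'a) \<Rightarrow> 'a set" where
  "SA mul e cj = {J. tr cj J = 0 \<and> nrm mul cj J = e}"

definition im_part :: "'a::real_vector \<Rightarrow> ('a \<Rightarrow> 'a) \<Rightarrow> 'a \<Rightarrow> 'a" where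
  "im_part e cj x = x - (1/2::real) *\<^sub>R tr cj x"

definition Omega :: "('a::real_vector \<Rightarrow> 'a \<Rightarrow> 'a) \<Rightarrow> 'a \<Rightarrow> ('a \<Rightarrow> 'a) \<Rightarrow> complex set \<Rightarrow> 'a set" where
  "Omega mul e cj D = {\<alpha> *\<^sub>R e + \<beta> *\<^sub>R J | \<alpha> \<beta> J. Complex \<alpha> \<beta> \<in> D \<and> J \<in> SA mul e cj}"

definition sphere_of :: "('a::real_vector \<Rightarrow> 'a \<Rightarrow> 'a) \<Rightarrow> 'a \<Rightarrow> ('a \<Rightarrow> 'a) \<Rightarrow> 'a \<Rightarrow> 'a set" where
  "sphere_of mul e cj x = {\<alpha> *\<^sub>R e + \<beta> *\<^sub>R I | \<alpha> \<beta> I. I \<in> SA mul e cj \<and>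
        (\<exists>J \<in> SA mul e cj. x = \<alpha> *\<^sub>R e + \<beta> *\<^sub>R J)}"

text \<open>Stem functions D \<rightarrow> A_\<complex>, where A_\<complex> = A \<times> A, (a,b) standing for a + \<i> b.\<close>
definition stem :: "complex set \<Rightarrow> (complex \<Rightarrow> 'a::real_vector \<times> 'a) \<Rightarrow> bool" where
  "stem D F \<longleftrightarrow> (\<forall>z\<in>D. F (cnj z) = (fst (F z), - snd (F z)))"

definition cmul :: "('a::real_vector \<Rightarrow> 'a \<Rightarrow> 'a) \<Rightarrow> 'a \<times> 'a \<Rightarrow> 'a \<times> 'a \<Rightarrow> 'a \<times> 'a" where
  "cmul mul u v = (mul (fst u) (fst v) - mul (snd u) (snd v),
                   mul (fst u) (snd v) + mul (snd u) (fst v))"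

definition stem_mult :: "('a::real_vector \<Rightarrow> 'a \<Rightarrow> 'a) \<Rightarrow> (complex \<Rightarrow> 'a \<times> 'a) \<Rightarrow> (complex \<Rightarrow> 'a \<times> 'a) \<Rightarrow> complex \<Rightarrow> 'a \<times> 'a" where
  "stem_mult mul F G = (\<lambda>z. cmul mul (F z) (G z))"

definition stem_conj :: "('a::real_vector \<Rightarrow> 'a) \<Rightarrow> (complex \<Rightarrow> 'a \<times> 'a) \<Rightarrow> complex \<Rightarrow> 'a \<times> 'a" where
  "stem_conj cj F = (\<lambda>z. (cj (fst (F z)), cj (snd (F z))))"

definition induced :: "('a::real_vector \<Rightarrow> 'a \<Rightarrow> 'a) \<Rightarrow> 'a \<Rightarrow> ('a \<Rightarrow> 'a) \<Rightarrow> complex set \<Rightarrow>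
    (complex \<Rightarrow> 'a \<times> 'a) \<Rightarrow> 'a \<Rightarrow> 'a" where
  "induced mul e cj D F x =
     (if x \<in> Omega mul e cj D then
        (SOME v. \<exists>\<alpha> \<beta> J. Complex \<alpha> \<beta> \<in> D \<and> J \<in> SA mul e cj \<and> x = \<alpha> *\<^sub>R e + \<beta> *\<^sub>R J \<and>
             v = fst (F (Complex \<alpha> \<beta>)) + mul J (snd (F (Complex \<alpha> \<beta>))))
      else 0)"

definition stemN :: "('a::real_vector \<Rightarrow> 'a \<Rightarrow> 'a) \<Rightarrow> ('a \<Rightarrow> 'a) \<Rightarrow> (complex \<Rightarrow> 'a \<times> 'a) \<Rightarrow> complex \<Rightarrow> 'a \<times> 'a" where
  "stemN mul cj F = stem_mult mul F (stem_conj cj F)"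

definition slice_preserving_stem :: "'a::real_vector \<Rightarrow> complex set \<Rightarrow> (complex \<Rightarrow> 'a \<times> 'a) \<Rightarrow> bool" where
  "slice_preserving_stem e D F \<longleftrightarrow> (\<forall>z\<in>D. isR e (fst (F z)) \<and> isR e (snd (F z)))"

definition tame :: "('a::real_vector \<Rightarrow> 'a \<Rightarrow> 'a) \<Rightarrow> 'a \<Rightarrow> ('a \<Rightarrow> 'a) \<Rightarrow> complex set \<Rightarrow>
    (complex \<Rightarrow> 'a \<times> 'a) \<Rightarrow> bool" where
  "tame mul e cj D F \<longleftrightarrow>
     slice_preserving_stem e D (stemN mul cj F) \<and>
     (\<forall>x \<in> Omega mul e cj D. induced mul e cj D (stemN mul cj F) x
                            = induced mul e cj D (stemN mul cj (stem_conj cj F)) x)"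

definition zeros :: "('a::real_vector \<Rightarrow> 'a \<Rightarrow> 'a) \<Rightarrow> 'a \<Rightarrow> ('a \<Rightarrow> 'a) \<Rightarrow> complex set \<Rightarrow>
    ('a \<Rightarrow> 'a) \<Rightarrow> 'a set" where
  "zeros mul e cj D h = {x \<in> Omega mul e cj D. h x = 0}"

definition sderiv :: "('a::real_vector \<Rightarrow> 'a \<Rightarrow> 'a) \<Rightarrow> 'a \<Rightarrow> ('a \<Rightarrow> 'a) \<Rightarrow> ('a \<Rightarrow> 'a) \<Rightarrow> 'a \<Rightarrow> 'a" where
  "sderiv mul e cj f x = (1/2::real) *\<^sub>R mul (ainv mul e (im_part e cj x)) (f x - f (cj x))"

end

theory Submission
  imports Defs
begin

(*
  Let x = \<alpha> + \<beta>J be a zero of f \<cdot> g and z = \<alpha> + i\<beta>. The value w = F(z)G(z) in the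
  complexification A_C satisfies w1 + J w2 = 0, i.e. (1, -J) w = 0, so w is not invertible.
  Tameness makes N(F)(z) = F(z) F(z)^c = F(z)^c F(z) a complex scalar, so F(z) is invertible in
  the alternative algebra A_C unless N(F)(z) = 0, and by the Moufang identities products of
  invertible elements are invertible. Hence N(F)(z) = 0 or N(G)(z) = 0.

  If N(F)(z) = 0 with F(z) = a + ib, either b = 0, and then n(a) = 0 forces a = 0, or
  b = \<beta> f'_s(x) lies in C_A, so b is invertible with central norms and I = -a b^-1 is an
  imaginary unit with a + I b = 0: f vanishes at \<alpha> + \<beta>I, a point of S_x.
*)

lemma real_vector_eq_neg_imp_zero:
  fixes a :: "'b::real_vector"
  assumes "a = - a" shows "a = 0"
proof -
  have "2 *\<^sub>R a = 0" using assms by (metis add.right_inverse scaleR_2)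
  then show ?thesis by simp
qed

lemma sum_and_difference_eq_imp_eq:
  fixes p q p' q' :: "'b::real_vector"
  assumes "p + q = p' + q'" and "p - q = p' - q'"
  shows "p = p'" and "q = q'"
proof -
  have "2 *\<^sub>R p = 2 *\<^sub>R p'"
    using arg_cong2[OF assms, of "(+)"] by (simp add: scaleR_2 algebra_simps)
  then show "p = p'" by simp
  with assms(1) show "q = q'" by simp
qed

section \<open>Alternative algebras\<close>

locale alt_algebra =
  fixes mul :: "'b::real_vector \<Rightarrow> 'b \<Rightarrow> 'b" and e :: 'b
  assumes add_left: "mul (x + y) z = mul x z + mul y z"
    and add_right: "mul x (y + z) = mul x y + mul x z"
    and scaleR_left: "mul (r *\<^sub>R x) y = r *\<^sub>R mul x y"
    and scaleR_right: "mul x (r *\<^sub>R y) = r *\<^sub>R mul x y"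
    and unit_left [simp]: "mul e x = x" and unit_right [simp]: "mul x e = x"
    and assoc_swap12: "assoc mul x y z = - assoc mul y x z"
    and assoc_swap23: "assoc mul x y z = - assoc mul x z y"
begin

abbreviation A where "A \<equiv> assoc mul"

lemma zero_left [simp]: "mul 0 x = 0" using scaleR_left[of 0 x x] by simp
lemma zero_right [simp]: "mul x 0 = 0" using scaleR_right[of x 0 x] by simp
lemma minus_left: "mul (- x) y = - mul x y" using scaleR_left[of "-1" x y] by simp
lemma minus_right: "mul x (- y) = - mul x y" using scaleR_right[of x "-1" y] by simp
lemma diff_left: "mul (x - y) z = mul x z - mul y z"
  by (simp only: diff_conv_add_uminus add_left minus_left)
lemma diff_right: "mul x (y - z) = mul x y - mul x z"
  by (simp only: diff_conv_add_uminus add_right minus_right)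

lemmas mult_distribs = add_left add_right scaleR_left scaleR_right minus_left minus_right
  diff_left diff_right

lemma mult_assoc_of_assoc_zero: "A x y z = 0 \<Longrightarrow> mul (mul x y) z = mul x (mul y z)"
  unfolding assoc_def by simp

lemma assoc_x_x_y [simp]: "A x x y = 0"
  using assoc_swap12[of x x y] by (rule real_vector_eq_neg_imp_zero)
lemma assoc_x_y_y [simp]: "A x y y = 0"
  using assoc_swap23[of x y y] by (rule real_vector_eq_neg_imp_zero)
lemma assoc_x_y_x [simp]: "A x y x = 0"
  using assoc_swap23[of x y x] assoc_swap12[of y x x] by simp
lemma assoc_cyclic: "A x y z = A y z x"
  using assoc_swap12[of x y z] assoc_swap23[of y x z] by simp

lemma teichmueller:
  "A (mul a b) c d - A a (mul b c) d + A a b (mul c d) = mul a (A b c d) + mul (A a b c) d"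
  unfolding assoc_def by (simp add: mult_distribs algebra_simps)

lemma assoc_x_y_zx: "A x y (mul z x) = mul x (A x y z)"
proof -
  define P Q R S U where "P = A x y (mul z x)" and "Q = A x (mul x y) z"
    and "R = A (mul x x) y z" and "S = mul x (A x y z)" and "U = mul (A x y z) x"
  have hR: "R = U + P"
    using teichmueller[of y z x x] assoc_cyclic[of x y "mul z x"] assoc_cyclic[of "mul x x" y z]
      assoc_cyclic[of x y z]
    unfolding P_def R_def U_def by (simp add: algebra_simps)
  have hQ: "R - Q = S"
    using teichmueller[of x x y z] unfolding Q_def R_def S_def by simp
  have "Q + P = S + U"
    using teichmueller[of x y z x] assoc_cyclic[of x "mul x y" z] assoc_cyclic[of x y z]
    unfolding P_def Q_def S_def U_def by simp
  moreover have "Q = U + P - S" using hR hQ by (simp add: algebra_simps)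
  ultimately have "2 *\<^sub>R P = 2 *\<^sub>R S" by (simp add: algebra_simps scaleR_2)
  then show ?thesis unfolding P_def S_def by simp
qed

lemma assoc_x_xy_z: "A x (mul x y) z = mul (A x y z) x"
  using teichmueller[of x x y z] teichmueller[of y z x x] assoc_x_y_zx[of x y z]
    assoc_cyclic[of x y "mul z x"] assoc_cyclic[of "mul x x" y z] assoc_cyclic[of x y z]
  by (simp add: algebra_simps)

lemma assoc_x_yx_z: "A x (mul y x) z = mul x (A x y z)"
  using assoc_swap23[of x "mul y x" z] assoc_x_y_zx[of x z y] assoc_swap23[of x z y]
  by (simp add: minus_right)

lemma assoc_x_y_xz: "A x y (mul x z) = mul (A x y z) x"
  using teichmueller[of x y x z] assoc_swap12[of "mul x y" x z] assoc_swap12[of y x z]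
  by (simp add: assoc_x_xy_z assoc_x_yx_z minus_right)

lemma moufang_left: "mul (mul (mul x y) x) z = mul x (mul y (mul x z))"
proof -
  have "mul (mul (mul x y) x) z - mul x (mul y (mul x z)) = A (mul x y) x z + A x y (mul x z)"
    unfolding assoc_def by simp
  then show ?thesis using assoc_swap12[of "mul x y" x z] by (simp add: assoc_x_xy_z assoc_x_y_xz)
qed

lemma moufang_right: "mul (mul (mul z x) y) x = mul z (mul x (mul y x))"
proof -
  have "mul (mul (mul z x) y) x - mul z (mul x (mul y x)) = A (mul z x) y x + A z x (mul y x)"
    unfolding assoc_def by simp
  moreover have "A (mul z x) y x = - A x y (mul z x)"
    using assoc_cyclic[of "mul z x" y x] assoc_swap23[of x "mul z x" y] assoc_swap12 by metis
  moreover have "A z x (mul y x) = A x (mul y x) z" using assoc_cyclic by metis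
  ultimately show ?thesis by (simp add: assoc_x_y_zx assoc_x_yx_z)
qed

lemma moufang_middle: "mul (mul x y) (mul z x) = mul x (mul (mul y z) x)"
proof -
  have "mul (mul x y) (mul z x) = mul x (mul y (mul z x)) + A x y (mul z x)"
    "mul (mul y z) x = mul y (mul z x) + A y z x"
    unfolding assoc_def by simp_all
  then show ?thesis using assoc_cyclic[of x y z] by (simp add: assoc_x_y_zx add_right)
qed

definition is_inverse :: "'b \<Rightarrow> 'b \<Rightarrow> bool" where
  "is_inverse a w \<longleftrightarrow> mul a w = e \<and> mul w a = e"

lemma is_inverse_sym: "is_inverse a w \<Longrightarrow> is_inverse w a"
  unfolding is_inverse_def by simp

lemma left_inverse_property:
  assumes "is_inverse a w" shows "mul w (mul a y) = y"
proof -
  have aw: "mul a w = e" "mul w a = e" using assms unfolding is_inverse_def by auto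
  have "mul a (mul w w) = w" using mult_assoc_of_assoc_zero[OF assoc_x_y_y[of a w]] aw by simp
  then have cancel: "t = mul a (mul (mul w w) (mul a t))" for t
    using moufang_left[of a "mul w w" t] aw by simp
  have "mul a y = mul a (mul w (mul a y))" using moufang_left[of a w y] aw by simp
  then have "mul a (mul w (mul a y) - y) = 0" by (simp add: diff_right)
  then show ?thesis using cancel[of "mul w (mul a y) - y"] by simp
qed

lemma right_inverse_property:
  assumes "is_inverse a w" shows "mul (mul y a) w = y"
proof -
  have aw: "mul a w = e" "mul w a = e" using assms unfolding is_inverse_def by auto
  have "mul (mul w w) a = w" using mult_assoc_of_assoc_zero[OF assoc_x_x_y[of w a]] aw by simp
  then have cancel: "t = mul (mul (mul t a) (mul w w)) a" for t
    using moufang_right[of t a "mul w w"] aw by simp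
  have "mul y a = mul (mul (mul y a) w) a" using moufang_right[of y a w] aw by simp
  then have "mul (mul (mul y a) w - y) a = 0" by (simp add: diff_left)
  then show ?thesis using cancel[of "mul (mul y a) w - y"] by simp
qed

lemma inverse_unique: "is_inverse a w \<Longrightarrow> is_inverse a w' \<Longrightarrow> w = w'"
  using left_inverse_property[of a w w'] unfolding is_inverse_def by simp

lemma is_inverse_mult:
  assumes a: "is_inverse a a'" and b: "is_inverse b b'"
  shows "is_inverse (mul a b) (mul b' a')"
proof -
  have right: "mul (mul a b) (mul b' a') = e" if a: "is_inverse a a'" and b: "is_inverse b b'"
    for a a' b b'
  proof -
    have "mul a a' = e" "mul a' a = e" using a unfolding is_inverse_def by simp_all
    moreover have "mul a' (mul (mul a a) b) = mul a b"
      using left_inverse_property[OF a, of "mul a b"]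
        mult_assoc_of_assoc_zero[OF assoc_x_x_y[of a b]]
      by simp
    moreover have "mul (mul (mul a a) b) b' = mul a a" using right_inverse_property[OF b] by simp
    moreover have "mul (mul a a) a' = a"
      using mult_assoc_of_assoc_zero[OF assoc_x_x_y[of a a']] \<open>mul a a' = e\<close> by simp
    ultimately show ?thesis using moufang_middle[of a' "mul (mul a a) b" b'] by simp
  qed
  show ?thesis unfolding is_inverse_def
    using right[OF a b] right[OF is_inverse_sym[OF b] is_inverse_sym[OF a]] by simp
qed

lemma center_assoc_left: "c \<in> center mul \<Longrightarrow> A c x y = 0"
  unfolding center_def by blast
lemma center_commute: "c \<in> center mul \<Longrightarrow> mul c x = mul x c"
  unfolding center_def by blast
lemma center_assoc_middle: "c \<in> center mul \<Longrightarrow> A x c y = 0"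
  using center_assoc_left[of c x y] assoc_swap12[of x c y] by simp
lemma center_assoc_right: "c \<in> center mul \<Longrightarrow> A x y c = 0"
  using center_assoc_left[of c x y] assoc_cyclic[of x y c] assoc_cyclic[of y c x] by simp

lemma assoc_center_mult_left:
  assumes c: "c \<in> center mul" shows "A (mul c a) b d = mul c (A a b d)"
  unfolding assoc_def
  by (simp add: mult_assoc_of_assoc_zero[OF center_assoc_left[OF c]] diff_right)

lemma assoc_mult_center_right:
  assumes c: "c \<in> center mul" shows "A a b (mul d c) = mul (A a b d) c"
  unfolding assoc_def
  by (simp add: mult_assoc_of_assoc_zero[OF center_assoc_right[OF c], symmetric] diff_left)

lemma center_inverse:
  assumes c: "c \<in> center mul" and ci: "is_inverse c c'" shows "c' \<in> center mul"
proof -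
  have cc: "mul c c' = e" "mul c' c = e" using ci unfolding is_inverse_def by auto
  note c_assoc = mult_assoc_of_assoc_zero[OF center_assoc_left[OF c]]
    mult_assoc_of_assoc_zero[OF center_assoc_middle[OF c]]
  have "mul c' x = mul x c'" for x
  proof -
    have "mul x c' = mul c' (mul c (mul x c'))" using cc c_assoc(2)[of c' "mul x c'"] by simp
    also have "mul c (mul x c') = mul x (mul c c')"
      using c_assoc center_commute[OF c] by metis
    finally show ?thesis using cc by simp
  qed
  moreover have "A c' y z = 0" for y z
  proof -
    have "mul c (mul (mul c' y) z) = mul y z" "mul c (mul c' (mul y z)) = mul y z"
      using c_assoc(1) cc by (metis unit_left)+
    then have "mul (mul c' y) z = mul c' (mul y z)"
      using left_inverse_property[OF ci] by metis
    then show ?thesis unfolding assoc_def by simp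
  qed
  ultimately show ?thesis unfolding center_def by auto
qed

lemma is_inverse_of_central_products:
  assumes xy: "mul x y = m" and yx: "mul y x = m'"
    and m: "m \<in> center mul" "is_inverse m mi" and m': "m' \<in> center mul" "is_inverse m' mi'"
  shows "is_inverse x (mul y mi)"
proof -
  have mi: "mi \<in> center mul" and mi': "mi' \<in> center mul" using center_inverse m m' by blast+
  have right: "mul x (mul y mi) = e"
    using mult_assoc_of_assoc_zero[OF center_assoc_right[OF mi], of x y] xy m(2)
    unfolding is_inverse_def by simp
  have left: "mul (mul mi' y) x = e"
    using mult_assoc_of_assoc_zero[OF center_assoc_left[OF mi'], of y x] yx m'(2)
    unfolding is_inverse_def by simp
  have "A (mul mi' y) x (mul y mi) = 0"
    by (simp add: assoc_center_mult_left[OF mi'] assoc_mult_center_right[OF mi])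
  then have "mul y mi = mul mi' y"
    using mult_assoc_of_assoc_zero right left by (metis unit_left unit_right)
  then show ?thesis unfolding is_inverse_def using right left by simp
qed

lemma center_scaleR_iff:
  assumes "r \<noteq> 0" shows "r *\<^sub>R m \<in> center mul \<longleftrightarrow> m \<in> center mul"
proof -
  have "A (r *\<^sub>R m) x y = r *\<^sub>R A m x y" for x y
    unfolding assoc_def by (simp add: mult_distribs algebra_simps)
  then show ?thesis using assms unfolding center_def by (auto simp: mult_distribs)
qed

lemma invertible_el_iff: "invertible_el mul e m \<longleftrightarrow> (\<exists>m'. is_inverse m m')"
  unfolding invertible_el_def is_inverse_def by blast

lemma invertible_el_scaleR_iff:
  assumes "r \<noteq> 0" shows "invertible_el mul e (r *\<^sub>R m) \<longleftrightarrow> invertible_el mul e m"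
proof -
  have "invertible_el mul e (s *\<^sub>R x)" if s: "s \<noteq> 0" and x: "invertible_el mul e x" for s x
  proof -
    obtain y where "mul x y = e" "mul y x = e" using x unfolding invertible_el_def by blast
    then show ?thesis unfolding invertible_el_def
      using s by (intro exI[of _ "inverse s *\<^sub>R y"]) (simp add: mult_distribs)
  qed
  from this[of r m] this[of "inverse r" "r *\<^sub>R m"] show ?thesis using assms by auto
qed

lemma assoc_cmul:
  "assoc (cmul mul) u v w =
    (A (fst u) (fst v) (fst w) - A (fst u) (snd v) (snd w) - A (snd u) (fst v) (snd w)
       - A (snd u) (snd v) (fst w),
     A (fst u) (fst v) (snd w) + A (fst u) (snd v) (fst w) + A (snd u) (fst v) (fst w)
       - A (snd u) (snd v) (snd w))"
  unfolding assoc_def by (simp add: cmul_def mult_distribs algebra_simps)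

lemma alt_algebra_cmul: "alt_algebra (cmul mul) (e, 0)"
proof
  fix x y z :: "'b \<times> 'b" and r :: real
  show "cmul mul (x + y) z = cmul mul x z + cmul mul y z"
    "cmul mul x (y + z) = cmul mul x y + cmul mul x z"
    "cmul mul (r *\<^sub>R x) y = r *\<^sub>R cmul mul x y" "cmul mul x (r *\<^sub>R y) = r *\<^sub>R cmul mul x y"
    "cmul mul (e, 0) x = x" "cmul mul x (e, 0) = x"
    by (simp_all add: cmul_def mult_distribs algebra_simps)
  show "assoc (cmul mul) x y z = - assoc (cmul mul) y x z"
    unfolding assoc_cmul
    using assoc_swap12[of "fst x" "fst y"] assoc_swap12[of "fst x" "snd y"]
      assoc_swap12[of "snd x" "fst y"] assoc_swap12[of "snd x" "snd y"]
    by (simp add: algebra_simps)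
  show "assoc (cmul mul) x y z = - assoc (cmul mul) x z y"
    unfolding assoc_cmul
    using assoc_swap23[of "fst x" "fst y"] assoc_swap23[of "fst x" "snd y"]
      assoc_swap23[of "snd x" "fst y"] assoc_swap23[of "snd x" "snd y"]
    by (simp add: algebra_simps)
qed

end

section \<open>Slice functions over an alternative *-algebra\<close>

locale alt_star_algebra =
  fixes mul :: "'a::real_vector \<Rightarrow> 'a \<Rightarrow> 'a" and e :: 'a and cj :: "'a \<Rightarrow> 'a"
  assumes alt_star_alg: "alt_star_alg mul e cj"
begin

sublocale alt_algebra mul e
proof
  fix x y z :: 'a and r :: real
  have "bilinear mul" using alt_star_alg unfolding alt_star_alg_def by blast
  then show "mul (x + y) z = mul x z + mul y z" "mul x (y + z) = mul x y + mul x z"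
    "mul (r *\<^sub>R x) y = r *\<^sub>R mul x y" "mul x (r *\<^sub>R y) = r *\<^sub>R mul x y"
    by (simp_all add: bilinear_def linear_iff)
  show "mul e x = x" "mul x e = x" "assoc mul x y z = - assoc mul y x z"
    "assoc mul x y z = - assoc mul x z y"
    using alt_star_alg unfolding alt_star_alg_def by blast+
qed

sublocale C: alt_algebra "cmul mul" "(e, 0)"
  by (rule alt_algebra_cmul)

lemma e_nonzero: "e \<noteq> 0"
  using alt_star_alg unfolding alt_star_alg_def by blast

lemma cj_linear: "linear cj"
  using alt_star_alg unfolding alt_star_alg_def by blast
lemma cj_cj [simp]: "cj (cj x) = x"
  using alt_star_alg unfolding alt_star_alg_def by blast
lemma cj_mul: "cj (mul x y) = mul (cj y) (cj x)"
  using alt_star_alg unfolding alt_star_alg_def by blast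

lemma cj_add [simp]: "cj (x + y) = cj x + cj y"
  using cj_linear by (simp add: linear_iff)
lemma cj_scaleR [simp]: "cj (r *\<^sub>R x) = r *\<^sub>R cj x"
  using cj_linear by (simp add: linear_iff)
lemma cj_minus [simp]: "cj (- x) = - cj x"
  by (rule linear_neg[OF cj_linear])
lemma cj_e [simp]: "cj e = e"
  using alt_star_alg unfolding alt_star_alg_def by (metis scaleR_one)

lemma cj_is_inverse_self_adjoint:
  assumes "cj m = m" and "is_inverse m m'" shows "cj m' = m'"
proof -
  have "is_inverse m (cj m')"
    using assms arg_cong[of _ _ cj] unfolding is_inverse_def by (metis cj_e cj_mul)
  then show ?thesis using inverse_unique assms(2) by blast
qed

lemma nrm_scaleR: "nrm mul cj (r *\<^sub>R x) = (r * r) *\<^sub>R nrm mul cj x"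
  unfolding nrm_def by (simp add: mult_distribs)

lemma SA_cj:
  assumes "J \<in> SA mul e cj" shows "cj J = - J"
proof -
  have "J + cj J = 0" using assms unfolding SA_def tr_def by simp
  then show ?thesis by (simp add: eq_neg_iff_add_eq_0 add.commute)
qed

lemma SA_mul_self:
  assumes "J \<in> SA mul e cj" shows "mul J J = - e"
proof -
  have "mul J (cj J) = e" using assms unfolding SA_def nrm_def by simp
  then have "- mul J J = e" using SA_cj[OF assms] by (simp add: minus_right)
  then show ?thesis by (metis minus_minus)
qed

lemma SA_mul_mul: "J \<in> SA mul e cj \<Longrightarrow> mul J (mul J y) = - y"
  using mult_assoc_of_assoc_zero[OF assoc_x_x_y[of J y]] SA_mul_self[of J] by (simp add: minus_left)

lemma SA_uminus:
  assumes "J \<in> SA mul e cj" shows "- J \<in> SA mul e cj"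
  using SA_cj[OF assms] SA_mul_self[OF assms] unfolding SA_def tr_def nrm_def
  by (simp add: minus_left)

lemma Omega_memI: "Complex \<alpha> \<beta> \<in> D \<Longrightarrow> J \<in> SA mul e cj \<Longrightarrow> \<alpha> *\<^sub>R e + \<beta> *\<^sub>R J \<in> Omega mul e cj D"
  unfolding Omega_def by blast

lemma slice_coordinates_unique:
  assumes J: "J \<in> SA mul e cj" and J': "J' \<in> SA mul e cj"
    and eq: "\<alpha> *\<^sub>R e + \<beta> *\<^sub>R J = \<alpha>' *\<^sub>R e + \<beta>' *\<^sub>R J'"
  shows "\<alpha> = \<alpha>' \<and> (\<beta> = \<beta>' \<and> J = J' \<or> \<beta> = - \<beta>' \<and> J = - J' \<or> \<beta> = 0 \<and> \<beta>' = 0)"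
proof -
  have "\<alpha> *\<^sub>R e - \<beta> *\<^sub>R J = \<alpha>' *\<^sub>R e - \<beta>' *\<^sub>R J'"
    using arg_cong[OF eq, of cj] SA_cj[OF J] SA_cj[OF J'] by simp
  note re_im = sum_and_difference_eq_imp_eq[OF eq this]
  have \<alpha>: "\<alpha> = \<alpha>'" using re_im(1) e_nonzero by (simp add: scaleR_cancel_right)
  have "mul (\<beta> *\<^sub>R J) (\<beta> *\<^sub>R J) = mul (\<beta>' *\<^sub>R J') (\<beta>' *\<^sub>R J')" using re_im(2) by simp
  then have "(\<beta> * \<beta>) *\<^sub>R e = (\<beta>' * \<beta>') *\<^sub>R e"
    using SA_mul_self[OF J] SA_mul_self[OF J'] by (simp add: mult_distribs)
  then have "\<beta> = \<beta>' \<or> \<beta> = - \<beta>'"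
    using e_nonzero by (simp add: scaleR_cancel_right square_eq_iff)
  then show ?thesis
  proof
    assume "\<beta> = \<beta>'"
    then show ?thesis using \<alpha> re_im(2) by (cases "\<beta> = 0") auto
  next
    assume \<beta>: "\<beta> = - \<beta>'"
    show ?thesis
    proof (cases "\<beta> = 0")
      case False
      then have "\<beta>' *\<^sub>R (- J) = \<beta>' *\<^sub>R J'" using \<beta> re_im(2) by simp
      then have "- J = J'" using False \<beta> by (simp only: scaleR_cancel_left) simp
      then show ?thesis using \<alpha> \<beta> by auto
    qed (use \<alpha> \<beta> in simp)
  qed
qed

lemma stem_at_cnj:
  assumes "stem D H" and "Complex \<alpha> \<beta> \<in> D"
  shows "H (Complex \<alpha> (- \<beta>)) = (fst (H (Complex \<alpha> \<beta>)), - snd (H (Complex \<alpha> \<beta>)))"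
proof -
  have "H (cnj (Complex \<alpha> \<beta>)) = (fst (H (Complex \<alpha> \<beta>)), - snd (H (Complex \<alpha> \<beta>)))"
    using assms unfolding stem_def by blast
  then show ?thesis by (simp only: complex_cnj)
qed

lemma stem_snd_real:
  assumes "stem D H" and "Complex \<alpha> 0 \<in> D" shows "snd (H (Complex \<alpha> 0)) = 0"
proof (rule real_vector_eq_neg_imp_zero)
  show "snd (H (Complex \<alpha> 0)) = - snd (H (Complex \<alpha> 0))"
    using arg_cong[OF stem_at_cnj[OF assms], of snd] by simp
qed

lemma induced_eval:
  assumes H: "stem D H" and z: "Complex \<alpha> \<beta> \<in> D" and J: "J \<in> SA mul e cj"
  shows "induced mul e cj D H (\<alpha> *\<^sub>R e + \<beta> *\<^sub>R J)
    = fst (H (Complex \<alpha> \<beta>)) + mul J (snd (H (Complex \<alpha> \<beta>)))"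
  unfolding induced_def if_P[OF Omega_memI[OF z J]]
proof (rule some_equality)
  fix v assume "\<exists>\<alpha>' \<beta>' J'. Complex \<alpha>' \<beta>' \<in> D \<and> J' \<in> SA mul e cj
    \<and> \<alpha> *\<^sub>R e + \<beta> *\<^sub>R J = \<alpha>' *\<^sub>R e + \<beta>' *\<^sub>R J'
    \<and> v = fst (H (Complex \<alpha>' \<beta>')) + mul J' (snd (H (Complex \<alpha>' \<beta>')))"
  then obtain \<alpha>' \<beta>' J' where z': "Complex \<alpha>' \<beta>' \<in> D" and J': "J' \<in> SA mul e cj"
    and eq: "\<alpha> *\<^sub>R e + \<beta> *\<^sub>R J = \<alpha>' *\<^sub>R e + \<beta>' *\<^sub>R J'"
    and v: "v = fst (H (Complex \<alpha>' \<beta>')) + mul J' (snd (H (Complex \<alpha>' \<beta>')))" by blast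
  show "v = fst (H (Complex \<alpha> \<beta>)) + mul J (snd (H (Complex \<alpha> \<beta>)))"
    using slice_coordinates_unique[OF J J' eq]
  proof (elim conjE disjE)
    assume "\<alpha> = \<alpha>'" "\<beta> = - \<beta>'" "J = - J'"
    then show ?thesis using v stem_at_cnj[OF H z'] by (simp add: minus_left minus_right)
  next
    assume "\<alpha> = \<alpha>'" "\<beta> = 0" "\<beta>' = 0"
    then show ?thesis using v stem_snd_real[OF H] z by simp
  qed (use v in simp)
qed (use z J in blast)

lemma stem_stem_conj: "stem D F \<Longrightarrow> stem D (stem_conj cj F)"
  unfolding stem_def stem_conj_def by simp

lemma stem_stem_mult: "stem D F \<Longrightarrow> stem D G \<Longrightarrow> stem D (stem_mult mul F G)"
  unfolding stem_def stem_mult_def cmul_def by (simp add: minus_left minus_right)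

lemma stem_stemN: "stem D F \<Longrightarrow> stem D (stemN mul cj F)"
  unfolding stemN_def by (intro stem_stem_mult stem_stem_conj)

lemma zeros_inducedE:
  assumes "x \<in> zeros mul e cj D (induced mul e cj D H)" and H: "stem D H"
  obtains \<alpha> \<beta> J where "Complex \<alpha> \<beta> \<in> D" and "J \<in> SA mul e cj" and "x = \<alpha> *\<^sub>R e + \<beta> *\<^sub>R J"
    and "fst (H (Complex \<alpha> \<beta>)) + mul J (snd (H (Complex \<alpha> \<beta>))) = 0"
proof -
  obtain \<alpha> \<beta> J where z: "Complex \<alpha> \<beta> \<in> D" and J: "J \<in> SA mul e cj" and x: "x = \<alpha> *\<^sub>R e + \<beta> *\<^sub>R J"
    using assms(1) unfolding zeros_def Omega_def by blast
  then show ?thesis using that assms(1) induced_eval[OF H z J] unfolding zeros_def by simp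
qed

lemma zeros_inducedI:
  assumes "stem D H" and z: "Complex \<alpha> \<beta> \<in> D" and J: "J \<in> SA mul e cj"
    and "fst (H (Complex \<alpha> \<beta>)) + mul J (snd (H (Complex \<alpha> \<beta>))) = 0"
  shows "\<alpha> *\<^sub>R e + \<beta> *\<^sub>R J \<in> zeros mul e cj D (induced mul e cj D H)"
  using assms Omega_memI[OF z J] induced_eval unfolding zeros_def by simp

section \<open>Zeros of products of tame slice functions\<close>

lemma tame_stemN_stem_conj:
  assumes tame: "tame mul e cj D F" and F: "stem D F" and SA: "SA mul e cj \<noteq> {}" and z: "z \<in> D"
  shows "stemN mul cj (stem_conj cj F) z = stemN mul cj F z"
proof -
  obtain J where J: "J \<in> SA mul e cj" using SA by blast
  define N M where "N = stemN mul cj F z" and "M = stemN mul cj (stem_conj cj F) z"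
  have z': "Complex (Re z) (Im z) \<in> D" using z by simp
  have "fst N + mul I (snd N) = fst M + mul I (snd M)" if I: "I \<in> SA mul e cj" for I
    using tame Omega_memI[OF z' I] induced_eval[OF stem_stemN[OF F] z' I]
      induced_eval[OF stem_stemN[OF stem_stem_conj[OF F]] z' I]
    unfolding tame_def N_def M_def by simp
  from this[OF J] this[OF SA_uminus[OF J]]
  have "fst N = fst M" and "mul J (snd N) = mul J (snd M)"
    using sum_and_difference_eq_imp_eq by (simp_all add: minus_left)
  moreover have "snd N = snd M"
    using arg_cong[OF \<open>mul J (snd N) = mul J (snd M)\<close>, of "mul J"] SA_mul_mul[OF J] by simp
  ultimately show ?thesis unfolding N_def M_def by (simp add: prod_eq_iff)
qed

(* On A_C = A \<times> A, with (a, b) standing for a + \<i>b, cscale is multiplication by a complex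
   scalar and of_cplx embeds \<complex> into A_C. *)
definition cscale :: "complex \<Rightarrow> 'a \<times> 'a \<Rightarrow> 'a \<times> 'a" where
  "cscale c x = (Re c *\<^sub>R fst x - Im c *\<^sub>R snd x, Re c *\<^sub>R snd x + Im c *\<^sub>R fst x)"

definition of_cplx :: "complex \<Rightarrow> 'a \<times> 'a" where
  "of_cplx c = (Re c *\<^sub>R e, Im c *\<^sub>R e)"

lemma cmul_cscale_left: "cmul mul (cscale c x) y = cscale c (cmul mul x y)"
  unfolding cscale_def cmul_def by (simp add: mult_distribs algebra_simps)
lemma cmul_cscale_right: "cmul mul x (cscale c y) = cscale c (cmul mul x y)"
  unfolding cscale_def cmul_def by (simp add: mult_distribs algebra_simps)
lemma cscale_of_cplx: "cscale c (of_cplx d) = of_cplx (c * d)"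
  unfolding cscale_def of_cplx_def by (simp add: algebra_simps)
lemma of_cplx_1: "of_cplx 1 = (e, 0)"
  unfolding of_cplx_def by simp
lemma of_cplx_eq_0_iff: "of_cplx c = 0 \<longleftrightarrow> c = 0"
  unfolding of_cplx_def using e_nonzero by (simp add: complex_eq_iff prod_eq_iff)

lemma is_inverse_of_cplx_norm:
  assumes "cmul mul u u' = of_cplx r" and "cmul mul u' u = of_cplx r" and "r \<noteq> 0"
  shows "C.is_inverse u (cscale (inverse r) u')"
  using assms unfolding C.is_inverse_def
  by (simp add: cmul_cscale_left cmul_cscale_right cscale_of_cplx of_cplx_1)

lemma slice_value_invertible_nonzero:
  assumes J: "J \<in> SA mul e cj" and w: "C.is_inverse w w'"
  shows "fst w + mul J (snd w) \<noteq> 0"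
proof
  assume "fst w + mul J (snd w) = 0"
  then have "fst w = - mul J (snd w)" by (simp add: eq_neg_iff_add_eq_0)
  then have "cmul mul (e, - J) w = 0"
    using SA_mul_mul[OF J] by (simp add: cmul_def minus_left minus_right zero_prod_def)
  then have "(e, - J) = 0" using C.right_inverse_property[OF w, of "(e, - J)"] by simp
  then show False using e_nonzero by (simp add: zero_prod_def)
qed

lemma tame_stem_value_invertible:
  assumes tame: "tame mul e cj D F" and F: "stem D F" and SA: "SA mul e cj \<noteq> {}"
    and z: "z \<in> D" and N: "stemN mul cj F z \<noteq> 0"
  obtains w where "C.is_inverse (F z) w"
proof -
  obtain r1 r2 where "fst (stemN mul cj F z) = r1 *\<^sub>R e" and "snd (stemN mul cj F z) = r2 *\<^sub>R e"
    using tame z unfolding tame_def slice_preserving_stem_def isR_def by blast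
  then have r: "stemN mul cj F z = of_cplx (Complex r1 r2)"
    unfolding of_cplx_def by (simp add: prod_eq_iff)
  then have "cmul mul (F z) (stem_conj cj F z) = of_cplx (Complex r1 r2)"
    and "cmul mul (stem_conj cj F z) (F z) = of_cplx (Complex r1 r2)"
    using tame_stemN_stem_conj[OF tame F SA z]
    unfolding stemN_def stem_mult_def stem_conj_def by simp_all
  moreover have "Complex r1 r2 \<noteq> 0" using N r of_cplx_eq_0_iff by auto
  ultimately show ?thesis using is_inverse_of_cplx_norm that by blast
qed

lemma stemN_zero_if_stem_mult_slice_zero:
  assumes "tame mul e cj D F" and "tame mul e cj D G" and "stem D F" and "stem D G"
    and SA: "SA mul e cj \<noteq> {}" and z: "z \<in> D" and J: "J \<in> SA mul e cj"
    and FG: "fst (stem_mult mul F G z) + mul J (snd (stem_mult mul F G z)) = 0"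
  shows "stemN mul cj F z = 0 \<or> stemN mul cj G z = 0"
proof (rule ccontr)
  assume "\<not> ?thesis"
  then obtain u v where "C.is_inverse (F z) u" and "C.is_inverse (G z) v"
    using tame_stem_value_invertible[OF _ _ SA z] assms(1-4) by metis
  then have "C.is_inverse (stem_mult mul F G z) (cmul mul v u)"
    unfolding stem_mult_def by (rule C.is_inverse_mult)
  then show False using slice_value_invertible_nonzero[OF J] FG by blast
qed

lemma zeros_stem_mult_subset_zeros_stemN:
  assumes tF: "tame mul e cj D F" and tG: "tame mul e cj D G" and F: "stem D F" and G: "stem D G"
    and SA: "SA mul e cj \<noteq> {}"
  shows "zeros mul e cj D (induced mul e cj D (stem_mult mul F G))
    \<subseteq> zeros mul e cj D (induced mul e cj D (stemN mul cj F))
      \<union> zeros mul e cj D (induced mul e cj D (stemN mul cj G))"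
proof
  fix x assume "x \<in> zeros mul e cj D (induced mul e cj D (stem_mult mul F G))"
  then obtain \<alpha> \<beta> J where z: "Complex \<alpha> \<beta> \<in> D" and J: "J \<in> SA mul e cj"
    and x: "x = \<alpha> *\<^sub>R e + \<beta> *\<^sub>R J"
    and "fst (stem_mult mul F G (Complex \<alpha> \<beta>)) + mul J (snd (stem_mult mul F G (Complex \<alpha> \<beta>))) = 0"
    using zeros_inducedE stem_stem_mult[OF F G] by metis
  then have "stemN mul cj F (Complex \<alpha> \<beta>) = 0 \<or> stemN mul cj G (Complex \<alpha> \<beta>) = 0"
    using stemN_zero_if_stem_mult_slice_zero[OF tF tG F G SA z J] by blast
  then show "x \<in> zeros mul e cj D (induced mul e cj D (stemN mul cj F))
      \<union> zeros mul e cj D (induced mul e cj D (stemN mul cj G))"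
    using zeros_inducedI[OF stem_stemN[OF F] z J] zeros_inducedI[OF stem_stemN[OF G] z J] x by auto
qed

lemma CA_scaleR_iff:
  assumes "r \<noteq> 0" shows "r *\<^sub>R b \<in> CA mul e cj \<longleftrightarrow> b \<in> CA mul e cj"
proof -
  have "r * r \<noteq> 0" using assms by simp
  then show ?thesis using assms unfolding CA_def
    by (simp add: nrm_scaleR center_scaleR_iff invertible_el_scaleR_iff)
qed

lemma exists_SA_root:
  assumes b: "b \<in> CA mul e cj" "b \<noteq> 0"
    and n1: "mul a (cj a) = mul b (cj b)" and n2: "mul a (cj b) + mul b (cj a) = 0"
    and n3: "mul (cj a) a = mul (cj b) b"
  shows "\<exists>I \<in> SA mul e cj. a + mul I b = 0"
proof -
  (* The root is I = -a b^-1, with b^-1 = b^c (b b^c)^-1. *)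
  define m m' where "m = mul b (cj b)" and "m' = mul (cj b) b"
  have m: "m \<in> center mul" and m': "m' \<in> center mul"
    and "invertible_el mul e m" "invertible_el mul e m'"
    using b unfolding CA_def nrm_def m_def m'_def by auto
  then obtain mi mi' where mi: "is_inverse m mi" and mi': "is_inverse m' mi'"
    unfolding invertible_el_iff by blast
  have mi_center: "mi \<in> center mul" using center_inverse[OF m mi] .
  have cj_mi: "cj mi = mi"
    by (rule cj_is_inverse_self_adjoint[OF _ mi]) (simp add: m_def cj_mul)
  define r a' where "r = mul (cj b) mi" and "a' = mul (cj a) mi"
  have br: "is_inverse b r"
    unfolding r_def
    by (rule is_inverse_of_central_products[OF m_def[symmetric] m'_def[symmetric] m mi m' mi'])
  have aa': "is_inverse a a'"
    unfolding a'_def using n1 n3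
    by (intro is_inverse_of_central_products[OF _ _ m mi m' mi']) (simp_all add: m_def m'_def)
  note mi_assoc = mult_assoc_of_assoc_zero[OF center_assoc_left[OF mi_center]]
    mult_assoc_of_assoc_zero[OF center_assoc_right[OF mi_center]]
  have ar: "mul a r = mul mi (mul a (cj b))"
    unfolding r_def using mi_assoc(2)[of a "cj b", symmetric] center_commute[OF mi_center] by simp
  have "cj (mul a r) = mul (mul mi b) (cj a)" unfolding r_def by (simp add: cj_mul cj_mi)
  also have "\<dots> = mul mi (mul b (cj a))" by (rule mi_assoc(1))
  finally have cj_ar: "cj (mul a r) = mul mi (mul b (cj a))" .
  have ba': "mul b a' = mul mi (mul b (cj a))"
    unfolding a'_def using mi_assoc(2)[of b "cj a", symmetric] center_commute[OF mi_center] by simp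
  define I where "I = - mul a r"
  have "tr cj I = - mul mi (mul a (cj b) + mul b (cj a))"
    unfolding tr_def I_def cj_minus cj_ar unfolding ar by (simp add: add_right)
  then have "tr cj I = 0" using n2 by simp
  moreover have "nrm mul cj I = e"
    unfolding nrm_def I_def cj_minus cj_ar ba'[symmetric] minus_left minus_right minus_minus
    using is_inverse_mult[OF aa' is_inverse_sym[OF br]] unfolding is_inverse_def by simp
  moreover have "a + mul I b = 0"
    unfolding I_def minus_left using right_inverse_property[OF is_inverse_sym[OF br], of a] by simp
  ultimately show ?thesis unfolding SA_def by blast
qed

lemma ainv_eq: "is_inverse x y \<Longrightarrow> ainv mul e x = y"
  unfolding ainv_def using inverse_unique unfolding is_inverse_def by blast

lemma sderiv_eval:
  assumes F: "stem D F" and z: "Complex \<alpha> \<beta> \<in> D" and J: "J \<in> SA mul e cj" and \<beta>: "\<beta> \<noteq> 0"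
  shows "sderiv mul e cj (induced mul e cj D F) (\<alpha> *\<^sub>R e + \<beta> *\<^sub>R J)
    = (1 / \<beta>) *\<^sub>R snd (F (Complex \<alpha> \<beta>))"
proof -
  define x where "x = \<alpha> *\<^sub>R e + \<beta> *\<^sub>R J"
  have cj_x: "cj x = \<alpha> *\<^sub>R e + \<beta> *\<^sub>R (- J)" unfolding x_def using SA_cj[OF J] by simp
  have "im_part e cj x = \<beta> *\<^sub>R J"
    unfolding im_part_def tr_def cj_x unfolding x_def by (simp add: algebra_simps flip: scaleR_2)
  moreover have "is_inverse (\<beta> *\<^sub>R J) ((- 1 / \<beta>) *\<^sub>R J)"
    unfolding is_inverse_def using SA_mul_self[OF J] \<beta> by (simp add: mult_distribs)
  moreover have "induced mul e cj D F x - induced mul e cj D F (cj x)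
      = 2 *\<^sub>R mul J (snd (F (Complex \<alpha> \<beta>)))"
    unfolding cj_x unfolding x_def induced_eval[OF F z J] induced_eval[OF F z SA_uminus[OF J]]
    by (simp add: minus_left scaleR_2)
  ultimately show ?thesis
    unfolding x_def[symmetric] sderiv_def using \<beta>
    by (simp add: ainv_eq mult_distribs SA_mul_mul[OF J])
qed

lemma not_isR_slice:
  assumes J: "J \<in> SA mul e cj" and \<beta>: "\<beta> \<noteq> 0" shows "\<not> isR e (\<alpha> *\<^sub>R e + \<beta> *\<^sub>R J)"
proof
  assume "isR e (\<alpha> *\<^sub>R e + \<beta> *\<^sub>R J)"
  then obtain t where "\<alpha> *\<^sub>R e + \<beta> *\<^sub>R J = t *\<^sub>R e" unfolding isR_def by blast
  then have \<beta>J: "\<beta> *\<^sub>R J = (t - \<alpha>) *\<^sub>R e" by (simp add: algebra_simps)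
  have "J = inverse \<beta> *\<^sub>R (\<beta> *\<^sub>R J)" using \<beta> by simp
  also have "\<dots> = ((t - \<alpha>) / \<beta>) *\<^sub>R e" unfolding \<beta>J by (simp add: divide_inverse mult.commute)
  finally have "J = ((t - \<alpha>) / \<beta>) *\<^sub>R e" .
  then have "((t - \<alpha>) / \<beta>)\<^sup>2 *\<^sub>R e = (- 1) *\<^sub>R e"
    using SA_mul_self[OF J] by (simp add: mult_distribs power2_eq_square)
  then have "((t - \<alpha>) / \<beta>)\<^sup>2 = - 1" using e_nonzero by (simp only: scaleR_cancel_right) simp
  moreover have "0 \<le> ((t - \<alpha>) / \<beta>)\<^sup>2" by (rule zero_le_power2)
  ultimately show False by linarith
qed

lemma sphere_of_memI:
  "I \<in> SA mul e cj \<Longrightarrow> J \<in> SA mul e cj \<Longrightarrow> \<alpha> *\<^sub>R e + \<beta> *\<^sub>R J \<in> sphere_of mul e cj (\<alpha> *\<^sub>R e + \<beta> *\<^sub>R I)"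
  unfolding sphere_of_def by blast

lemma sphere_through_zero_if_stemN_zero:
  assumes F: "stem D F" and tame: "tame mul e cj D F" and SA: "SA mul e cj \<noteq> {}"
    and ns: "nonsingular mul cj" and z: "Complex \<alpha> \<beta> \<in> D" and J: "J \<in> SA mul e cj"
    and N: "stemN mul cj F (Complex \<alpha> \<beta>) = 0"
    and CA: "\<beta> \<noteq> 0 \<Longrightarrow> sderiv mul e cj (induced mul e cj D F) (\<alpha> *\<^sub>R e + \<beta> *\<^sub>R J) \<in> CA mul e cj"
  shows "\<exists>y \<in> zeros mul e cj D (induced mul e cj D F). \<alpha> *\<^sub>R e + \<beta> *\<^sub>R J \<in> sphere_of mul e cj y"
proof -
  define a b where "a = fst (F (Complex \<alpha> \<beta>))" and "b = snd (F (Complex \<alpha> \<beta>))"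
  have "stemN mul cj (stem_conj cj F) (Complex \<alpha> \<beta>) = 0"
    using tame_stemN_stem_conj[OF tame F SA z] N by simp
  then have n1: "mul a (cj a) = mul b (cj b)" and n2: "mul a (cj b) + mul b (cj a) = 0"
    and n3: "mul (cj a) a = mul (cj b) b"
    using N unfolding a_def b_def stemN_def stem_mult_def stem_conj_def cmul_def
    by (simp_all add: prod_eq_iff)
  have zero: "\<alpha> *\<^sub>R e + \<beta> *\<^sub>R I \<in> zeros mul e cj D (induced mul e cj D F)"
    if "I \<in> SA mul e cj" "a + mul I b = 0" for I
    using zeros_inducedI[OF F z] that unfolding a_def b_def by blast
  show ?thesis
  proof (cases "b = 0")
    case True
    then have "nrm mul cj a = 0" using n1 unfolding nrm_def by simp
    then have "a = 0" using ns unfolding nonsingular_def by blast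
    then have "\<alpha> *\<^sub>R e + \<beta> *\<^sub>R J \<in> zeros mul e cj D (induced mul e cj D F)"
      using zero[OF J] True by simp
    then show ?thesis using sphere_of_memI[OF J J] by blast
  next
    case False
    then have "\<beta> \<noteq> 0" using stem_snd_real[OF F] z unfolding b_def by auto
    then have "b \<in> CA mul e cj"
      using CA sderiv_eval[OF F z J] CA_scaleR_iff[of "1 / \<beta>" b] unfolding b_def by simp
    then obtain I where I: "I \<in> SA mul e cj" and "a + mul I b = 0"
      using exists_SA_root[OF _ False n1 n2 n3] by blast
    then have "\<alpha> *\<^sub>R e + \<beta> *\<^sub>R I \<in> zeros mul e cj D (induced mul e cj D F)" by (rule zero)
    then show ?thesis using sphere_of_memI[OF I J] by blast
  qed
qed

lemma zeros_stem_mult_subset_spheres: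
  assumes tF: "tame mul e cj D F" and tG: "tame mul e cj D G" and F: "stem D F" and G: "stem D G"
    and SA: "SA mul e cj \<noteq> {}" and ns: "nonsingular mul cj"
    and CA: "\<forall>x \<in> Omega mul e cj D. \<not> isR e x \<longrightarrow>
      sderiv mul e cj (induced mul e cj D F) x \<in> CA mul e cj \<and>
      sderiv mul e cj (induced mul e cj D G) x \<in> CA mul e cj"
  shows "zeros mul e cj D (induced mul e cj D (stem_mult mul F G))
    \<subseteq> (\<Union>y \<in> zeros mul e cj D (induced mul e cj D F) \<union> zeros mul e cj D (induced mul e cj D G).
          sphere_of mul e cj y)"
proof
  fix x assume "x \<in> zeros mul e cj D (induced mul e cj D (stem_mult mul F G))"
  then obtain \<alpha> \<beta> J where z: "Complex \<alpha> \<beta> \<in> D" and J: "J \<in> SA mul e cj"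
    and x: "x = \<alpha> *\<^sub>R e + \<beta> *\<^sub>R J"
    and "fst (stem_mult mul F G (Complex \<alpha> \<beta>)) + mul J (snd (stem_mult mul F G (Complex \<alpha> \<beta>))) = 0"
    using zeros_inducedE stem_stem_mult[OF F G] by metis
  then have "stemN mul cj F (Complex \<alpha> \<beta>) = 0 \<or> stemN mul cj G (Complex \<alpha> \<beta>) = 0"
    using stemN_zero_if_stem_mult_slice_zero[OF tF tG F G SA z J] by blast
  moreover have "\<beta> \<noteq> 0 \<Longrightarrow> sderiv mul e cj (induced mul e cj D H) (\<alpha> *\<^sub>R e + \<beta> *\<^sub>R J) \<in> CA mul e cj"
    if "H = F \<or> H = G" for H
    using CA Omega_memI[OF z J] not_isR_slice[OF J] that by blast
  ultimately show "x \<in> (\<Union>y \<in> zeros mul e cj D (induced mul e cj D F)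
      \<union> zeros mul e cj D (induced mul e cj D G). sphere_of mul e cj y)"
    using sphere_through_zero_if_stemN_zero[OF F tF SA ns z J]
      sphere_through_zero_if_stemN_zero[OF G tG SA ns z J] unfolding x by blast
qed

end

theorem proposition5p3:
  fixes mul :: "'a::real_vector \<Rightarrow> 'a \<Rightarrow> 'a" and e :: 'a and cj :: "'a \<Rightarrow> 'a"
    and D :: "complex set" and F G :: "complex \<Rightarrow> 'a \<times> 'a"
  assumes alg: "alt_star_alg mul e cj"
    and SA_ne: "SA mul e cj \<noteq> {}"
    and D_ne: "D \<noteq> {}" and D_cnj: "\<forall>z\<in>D. cnj z \<in> D"
    and stemF: "stem D F" and stemG: "stem D G"
    and tameF: "tame mul e cj D F" and tameG: "tame mul e cj D G"
  shows "(zeros mul e cj D (induced mul e cj D (stem_mult mul F G))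
           \<subseteq> zeros mul e cj D (induced mul e cj D (stemN mul cj F))
             \<union> zeros mul e cj D (induced mul e cj D (stemN mul cj G)))
     \<and> (nonsingular mul cj \<and>
         (\<forall>x \<in> Omega mul e cj D. \<not> isR e x \<longrightarrow>
             sderiv mul e cj (induced mul e cj D F) x \<in> CA mul e cj \<and>
             sderiv mul e cj (induced mul e cj D G) x \<in> CA mul e cj)
         \<longrightarrow> zeros mul e cj D (induced mul e cj D (stem_mult mul F G))
             \<subseteq> (\<Union>x \<in> zeros mul e cj D (induced mul e cj D F) \<union> zeros mul e cj D (induced mul e cj D G).
                    sphere_of mul e cj x))"
proof -
  interpret alt_star_algebra mul e cj by (rule alt_star_algebra.intro) (rule alg)
  show ?thesis
    using zeros_stem_mult_subset_zeros_stemN[OF tameF tameG stemF stemG SA_ne]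
      zeros_stem_mult_subset_spheres[OF tameF tameG stemF stemG SA_ne] by blast
qed

end
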